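(* Let $K$ be a coloring of the nodes of the network $\mathcal{G}_{mn}$. Suppose that for any two nodes $c,d$ of the same color and every color $k$: (i) the number of nodes of color $k$ in the same row as $c$ and distinct from $c$ equals the number of nodes of color $k$ in the same row as $d$ and distinct from $d$; and (ii) the analogous equality holds for columns. (That is, $K$ is balanced for the network obtained from $\mathcal{G}_{mn}$ by deleting the diagonal arrows and ignoring internal arrows.) Then $K$ is balanced for $\mathcal{G}_{mn}$.
   Context: For integers $m,n\ge1$, the network $\mathcal{G}_{mn}$ has node set $\{(i,j):1\le i\le m,\ 1\le j\le n\}$ ($i$ indexes rows, $j$ columns), all nodes of the same type. For each ordered pair of distinct nodes $(c,d)$ there is exactly one arrow with head $c$ and tail $d$, whose type is: "row" if $c,d$ lie in the same row, "column" if they lie in the same column, "diagonal" otherwise; in addition each node has an internal arrow from itself to itself (a fourth type). A coloring is a map from nodes to a set of colors. A coloring is balanced if whenever nodes $c,d$ have the same color, for every arrow type and every color $k$ the number of input arrows of that type to $c$ with tail of color $k$ equals the corresponding number for $d$. *)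

theory Defs
  imports Main
begin

definition nodes :: "nat \<Rightarrow> nat \<Rightarrow> (nat \<times> nat) set" where
  "nodes m n = {(i, j). 1 \<le> i \<and> i \<le> m \<and> 1 \<le> j \<and> j \<le> n}"

datatype arrow_type = RowArrow | ColArrow | DiagArrow | InternalArrow

text \<open>Type of the unique arrow with head c and tail d.\<close>
definition arrow_type :: "nat \<times> nat \<Rightarrow> nat \<times> nat \<Rightarrow> arrow_type" where
  "arrow_type c d =
     (if c = d then InternalArrow
      else if fst c = fst d then RowArrow
      else if snd c = snd d then ColArrow
      else DiagArrow)"

definition input_count ::
  "nat \<Rightarrow> nat \<Rightarrow> (nat \<times> nat \<Rightarrow> 'c) \<Rightarrow> arrow_type \<Rightarrow> 'c \<Rightarrow> nat \<times> nat \<Rightarrow> nat" where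
  "input_count m n K t k c = card {d \<in> nodes m n. arrow_type c d = t \<and> K d = k}"

definition balanced_Gmn :: "nat \<Rightarrow> nat \<Rightarrow> (nat \<times> nat \<Rightarrow> 'c) \<Rightarrow> bool" where
  "balanced_Gmn m n K \<longleftrightarrow>
     (\<forall>c \<in> nodes m n. \<forall>d \<in> nodes m n. K c = K d \<longrightarrow>
        (\<forall>t k. input_count m n K t k c = input_count m n K t k d))"

end

theory Submission
  imports Defs
begin

text \<open>For a fixed node c and colour k, the arrow types split the nodes of colour k into four
  classes, so the diagonal input count is determined by the other three. The row and column counts
  are balanced by hypothesis, and the internal count depends only on the colour of c.\<close>

lemma finite_nodes: "finite (nodes m n)"
proof -
  have "nodes m n \<subseteq> {1..m} \<times> {1..n}" by (auto simp: nodes_def)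
  then show ?thesis by (rule finite_subset) auto
qed

lemma input_count_RowArrow:
  "input_count m n K RowArrow k c = card {e \<in> nodes m n. fst e = fst c \<and> e \<noteq> c \<and> K e = k}"
  unfolding input_count_def arrow_type_def by (rule arg_cong[where f = card]) auto

lemma input_count_ColArrow:
  "input_count m n K ColArrow k c = card {e \<in> nodes m n. snd e = snd c \<and> e \<noteq> c \<and> K e = k}"
  unfolding input_count_def arrow_type_def by (rule arg_cong[where f = card]) (auto simp: prod_eq_iff)

lemma input_count_InternalArrow:
  "input_count m n K InternalArrow k c = (if c \<in> nodes m n \<and> K c = k then 1 else 0)"
proof -
  have "{d \<in> nodes m n. arrow_type c d = InternalArrow \<and> K d = k}
      = (if c \<in> nodes m n \<and> K c = k then {c} else {})"
    by (auto simp: arrow_type_def split: if_splits)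
  then show ?thesis by (simp add: input_count_def)
qed

lemma sum_input_count_arrow_types:
  "input_count m n K RowArrow k c + input_count m n K ColArrow k c
   + input_count m n K DiagArrow k c + input_count m n K InternalArrow k c
   = card {e \<in> nodes m n. K e = k}"
proof -
  define S where "S t = {d \<in> nodes m n. arrow_type c d = t \<and> K d = k}" for t
  let ?types = "{RowArrow, ColArrow, DiagArrow, InternalArrow}"
  have "{e \<in> nodes m n. K e = k} = (\<Union>t\<in>?types. S t)"
    by (auto simp: S_def intro: arrow_type.exhaust)
  moreover have "card (\<Union>t\<in>?types. S t) = (\<Sum>t\<in>?types. card (S t))"
    by (rule card_UN_disjoint) (auto simp: S_def finite_nodes)
  ultimately show ?thesis
    by (simp add: input_count_def S_def)
qed

theorem lemma3p3:
  fixes m n :: nat and K :: "nat \<times> nat \<Rightarrow> 'c"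
  assumes "m \<ge> 1" and "n \<ge> 1"
  assumes rows: "\<And>c d k. c \<in> nodes m n \<Longrightarrow> d \<in> nodes m n \<Longrightarrow> K c = K d \<Longrightarrow>
      card {e \<in> nodes m n. fst e = fst c \<and> e \<noteq> c \<and> K e = k}
    = card {e \<in> nodes m n. fst e = fst d \<and> e \<noteq> d \<and> K e = k}"
  assumes cols: "\<And>c d k. c \<in> nodes m n \<Longrightarrow> d \<in> nodes m n \<Longrightarrow> K c = K d \<Longrightarrow>
      card {e \<in> nodes m n. snd e = snd c \<and> e \<noteq> c \<and> K e = k}
    = card {e \<in> nodes m n. snd e = snd d \<and> e \<noteq> d \<and> K e = k}"
  shows "balanced_Gmn m n K"
  unfolding balanced_Gmn_def
proof (intro ballI impI allI)
  fix c d t k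
  assume c: "c \<in> nodes m n" and d: "d \<in> nodes m n" and colour: "K c = K d"
  have row: "input_count m n K RowArrow k c = input_count m n K RowArrow k d"
    using rows[OF c d colour] by (simp add: input_count_RowArrow)
  have col: "input_count m n K ColArrow k c = input_count m n K ColArrow k d"
    using cols[OF c d colour] by (simp add: input_count_ColArrow)
  have internal: "input_count m n K InternalArrow k c = input_count m n K InternalArrow k d"
    using c d colour by (simp add: input_count_InternalArrow)
  have diag: "input_count m n K DiagArrow k c = input_count m n K DiagArrow k d"
    using sum_input_count_arrow_types[of m n K k c] sum_input_count_arrow_types[of m n K k d]
      row col internal by simp
  show "input_count m n K t k c = input_count m n K t k d"
    by (cases t) (use row col diag internal in simp_all)
qed

end
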